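(* If $G$ is a connected bipartite graph, then $\mathrm{GP}(G)$ is an integer.
   Context: All graphs are simple and finite. For a connected graph $G$, $d_G(u,v)$ denotes the shortest-path distance and $\mathrm{Aut}(G)$ the automorphism group. The Graovac-Pisanski index is $$\mathrm{GP}(G)=\frac{|V(G)|}{2|\mathrm{Aut}(G)|}\sum_{u\in V(G)}\sum_{\alpha\in \mathrm{Aut}(G)} d_G(u,\alpha(u)).$$ *)

theory Defs
  imports Complex_Main
begin

definition simple_graph :: "'a set \<Rightarrow> ('a \<Rightarrow> 'a \<Rightarrow> bool) \<Rightarrow> bool" where
  "simple_graph V E \<longleftrightarrow> finite V \<and> (\<forall>u v. E u v \<longrightarrow> u \<in> V \<and> v \<in> V)
     \<and> (\<forall>u v. E u v \<longrightarrow> E v u) \<and> (\<forall>u. \<not> E u u)"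

definition is_walk :: "'a set \<Rightarrow> ('a \<Rightarrow> 'a \<Rightarrow> bool) \<Rightarrow> 'a list \<Rightarrow> bool" where
  "is_walk V E xs \<longleftrightarrow> xs \<noteq> [] \<and> set xs \<subseteq> V
     \<and> (\<forall>i. Suc i < length xs \<longrightarrow> E (xs ! i) (xs ! Suc i))"

definition graph_connected :: "'a set \<Rightarrow> ('a \<Rightarrow> 'a \<Rightarrow> bool) \<Rightarrow> bool" where
  "graph_connected V E \<longleftrightarrow> V \<noteq> {} \<and>
     (\<forall>u\<in>V. \<forall>v\<in>V. \<exists>xs. is_walk V E xs \<and> hd xs = u \<and> last xs = v)"

definition gdist :: "'a set \<Rightarrow> ('a \<Rightarrow> 'a \<Rightarrow> bool) \<Rightarrow> 'a \<Rightarrow> 'a \<Rightarrow> nat" where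
  "gdist V E u v = (LEAST n. \<exists>xs. is_walk V E xs \<and> hd xs = u \<and> last xs = v \<and> length xs = Suc n)"

definition bipartite :: "'a set \<Rightarrow> ('a \<Rightarrow> 'a \<Rightarrow> bool) \<Rightarrow> bool" where
  "bipartite V E \<longleftrightarrow> (\<exists>A \<subseteq> V. \<forall>u v. E u v \<longrightarrow> (u \<in> A \<longleftrightarrow> v \<notin> A))"

text \<open>Automorphisms, represented as extensional bijections (identity outside V).\<close>
definition Aut :: "'a set \<Rightarrow> ('a \<Rightarrow> 'a \<Rightarrow> bool) \<Rightarrow> ('a \<Rightarrow> 'a) set" where
  "Aut V E = {f. bij_betw f V V \<and> (\<forall>x. x \<notin> V \<longrightarrow> f x = x)
                 \<and> (\<forall>u\<in>V. \<forall>v\<in>V. E u v \<longleftrightarrow> E (f u) (f v))}"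

definition GP :: "'a set \<Rightarrow> ('a \<Rightarrow> 'a \<Rightarrow> bool) \<Rightarrow> real" where
  "GP V E = real (card V) / (2 * real (card (Aut V E)))
     * (\<Sum>u\<in>V. \<Sum>\<alpha>\<in>Aut V E. real (gdist V E u (\<alpha> u)))"

end

theory Submission
  imports Defs "HOL-Library.FuncSet"
begin

text \<open>Grouping the automorphisms by the image of \<open>u\<close> (orbit--stabiliser) gives
  \<open>\<Sum>\<alpha>. d(u, \<alpha> u) = |Aut| / |orbit u| * \<Sum>v\<in>orbit u. d(u, v)\<close>, and the last sum is
  constant on orbits. Hence \<open>GP(G)\<close> is \<open>|V| / 2\<close> times the integer
  \<open>\<Sum>\<^sub>O \<Sum>v\<in>O. d(w\<^sub>O, v)\<close>, one representative \<open>w\<^sub>O\<close> per orbit. If \<open>|V|\<close> is odd, the two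
  sides of the bipartition have different sizes, so no automorphism exchanges them; as the
  parity of \<open>d(u, v)\<close> records whether \<open>u\<close> and \<open>v\<close> lie on the same side, every
  \<open>d(u, \<alpha> u)\<close> is even and so is that integer.\<close>

lemma is_walk_Cons_Cons:
  "is_walk V E (x # y # xs) \<longleftrightarrow> x \<in> V \<and> E x y \<and> is_walk V E (y # xs)"
proof
  assume walk: "is_walk V E (x # y # xs)"
  have "E ((y # xs) ! i) ((y # xs) ! Suc i)" if "Suc i < length (y # xs)" for i
    using walk that unfolding is_walk_def by (metis Suc_less_eq length_Cons nth_Cons_Suc)
  with walk show "x \<in> V \<and> E x y \<and> is_walk V E (y # xs)"
    unfolding is_walk_def by (metis insert_subset list.simps(15) nth_Cons_0 nth_Cons_Suc
      length_Cons list.distinct(1) zero_less_Suc Suc_less_eq)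
next
  assume "x \<in> V \<and> E x y \<and> is_walk V E (y # xs)"
  then show "is_walk V E (x # y # xs)"
    unfolding is_walk_def by (auto simp: nth_Cons split: nat.splits)
qed

lemma is_walk_parity:
  assumes "is_walk V E xs" and "\<forall>u v. E u v \<longrightarrow> (u \<in> A \<longleftrightarrow> v \<notin> A)"
  shows "odd (length xs) \<longleftrightarrow> (hd xs \<in> A \<longleftrightarrow> last xs \<in> A)"
  using assms(1)
proof (induction xs rule: induct_list012)
  case 1
  then show ?case by (simp add: is_walk_def)
next
  case (2 x)
  then show ?case by simp
next
  case (3 x y zs)
  then have "E x y" and "is_walk V E (y # zs)" by (simp_all add: is_walk_Cons_Cons)
  with "3.IH"(2) assms(2) show ?case by auto
qed

lemma gdist_le_length:
  assumes "is_walk V E xs"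
  shows "gdist V E (hd xs) (last xs) \<le> length xs - 1"
proof -
  have "length xs = Suc (length xs - 1)"
    using assms by (cases xs) (auto simp: is_walk_def)
  then show ?thesis
    unfolding gdist_def using assms by (intro Least_le) blast
qed

lemma shortest_walk:
  assumes "graph_connected V E" and "u \<in> V" and "v \<in> V"
  obtains xs where "is_walk V E xs" and "hd xs = u" and "last xs = v"
    and "length xs = Suc (gdist V E u v)"
proof -
  obtain xs where xs: "is_walk V E xs" "hd xs = u" "last xs = v"
    using assms unfolding graph_connected_def by blast
  then have "length xs = Suc (length xs - 1)"
    by (cases xs) (auto simp: is_walk_def)
  with xs have "\<exists>n xs. is_walk V E xs \<and> hd xs = u \<and> last xs = v \<and> length xs = Suc n"
    by blast
  from LeastI_ex[OF this] show ?thesis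
    using that unfolding gdist_def by blast
qed

lemma bij_if_fixes_complement:
  assumes "bij_betw g V V" and "\<And>x. x \<notin> V \<Longrightarrow> g x = x"
  shows "bij g"
proof -
  have "bij_betw g (-V) (-V)"
    using bij_betw_cong[of "-V" g id] assms(2) by simp
  with assms(1) have "bij_betw g (V \<union> -V) (V \<union> -V)"
    by (rule bij_betw_combine) auto
  then show ?thesis by simp
qed

text \<open>Permutations of \<open>V\<close> are represented, like the automorphisms in \<open>Aut\<close>, by functions
  fixing every point outside \<open>V\<close>; they are then bijections of the whole type, so \<open>inv\<close> is
  their group inverse.\<close>

locale perm_group =
  fixes V :: "'a set" and G :: "('a \<Rightarrow> 'a) set"
  assumes finite_V: "finite V"
    and bij_betw_perm: "g \<in> G \<Longrightarrow> bij_betw g V V"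
    and perm_outside: "g \<in> G \<Longrightarrow> x \<notin> V \<Longrightarrow> g x = x"
    and id_mem: "id \<in> G"
    and comp_mem: "g \<in> G \<Longrightarrow> h \<in> G \<Longrightarrow> g \<circ> h \<in> G"
    and inv_mem: "g \<in> G \<Longrightarrow> inv g \<in> G"
begin

lemma bij_perm: "g \<in> G \<Longrightarrow> bij g"
  using bij_if_fixes_complement bij_betw_perm perm_outside by blast

lemma inv_perm_left [simp]: "g \<in> G \<Longrightarrow> inv g (g x) = x"
  using bij_perm bij_is_inj inv_f_f by metis

lemma inv_perm_right [simp]: "g \<in> G \<Longrightarrow> g (inv g x) = x"
  using bij_perm bij_is_surj surj_f_inv_f by metis

lemma perm_in_V: "g \<in> G \<Longrightarrow> x \<in> V \<Longrightarrow> g x \<in> V"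
  by (rule bij_betw_apply[OF bij_betw_perm])

lemma finite_G: "finite G"
proof -
  have "inj_on (\<lambda>g. restrict g V) G"
  proof (rule inj_onI, rule ext)
    fix g h x assume "g \<in> G" "h \<in> G" "restrict g V = restrict h V"
    then show "g x = h x"
    proof (cases "x \<in> V")
      case True
      then show ?thesis using fun_cong[OF \<open>restrict g V = restrict h V\<close>, of x] by simp
    qed (simp add: perm_outside \<open>g \<in> G\<close> \<open>h \<in> G\<close>)
  qed
  moreover have "(\<lambda>g. restrict g V) ` G \<subseteq> V \<rightarrow>\<^sub>E V"
    using perm_in_V by auto
  moreover have "finite (V \<rightarrow>\<^sub>E V)"
    using finite_V by (simp add: finite_PiE)
  ultimately show ?thesis
    by (meson finite_imageD finite_subset)
qed

definition orbit :: "'a \<Rightarrow> 'a set" where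
  "orbit u = (\<lambda>g. g u) ` G"

definition stabilizer :: "'a \<Rightarrow> ('a \<Rightarrow> 'a) set" where
  "stabilizer u = {g \<in> G. g u = u}"

lemma orbit_subset: "u \<in> V \<Longrightarrow> orbit u \<subseteq> V"
  unfolding orbit_def using perm_in_V by blast

lemma finite_orbit: "finite (orbit u)"
  unfolding orbit_def using finite_G by simp

lemma mem_orbit_self: "u \<in> orbit u"
  unfolding orbit_def using id_mem by (rule rev_image_eqI) simp

lemma image_orbit: assumes "g \<in> G" shows "g ` orbit u = orbit u"
proof
  show "g ` orbit u \<subseteq> orbit u"
  proof
    fix v assume "v \<in> g ` orbit u"
    then obtain h where "h \<in> G" "v = (g \<circ> h) u" unfolding orbit_def by auto
    then show "v \<in> orbit u" unfolding orbit_def using comp_mem[OF assms] by blast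
  qed
  show "orbit u \<subseteq> g ` orbit u"
  proof
    fix v assume "v \<in> orbit u"
    then obtain h where "h \<in> G" "v = h u" unfolding orbit_def by blast
    then have "v = g ((inv g \<circ> h) u)" using assms by simp
    then show "v \<in> g ` orbit u"
      unfolding orbit_def using comp_mem[OF inv_mem[OF assms] \<open>h \<in> G\<close>] by blast
  qed
qed

lemma orbit_perm: assumes "g \<in> G" shows "orbit (g u) = orbit u"
proof -
  have "orbit (g u) = (\<lambda>h. h u) ` ((\<lambda>h. h \<circ> g) ` G)"
    unfolding orbit_def by (simp add: image_image)
  also have "(\<lambda>h. h \<circ> g) ` G = G"
  proof
    show "(\<lambda>h. h \<circ> g) ` G \<subseteq> G" using comp_mem assms by blast
    have "h = (h \<circ> inv g) \<circ> g" if "h \<in> G" for h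
      using assms by (auto simp: fun_eq_iff)
    then show "G \<subseteq> (\<lambda>h. h \<circ> g) ` G"
      using comp_mem inv_mem assms by blast
  qed
  finally show ?thesis unfolding orbit_def .
qed

lemma orbit_eq: assumes "v \<in> orbit u" shows "orbit v = orbit u"
proof -
  obtain g where "g \<in> G" "v = g u" using assms unfolding orbit_def by blast
  then show ?thesis using orbit_perm[OF \<open>g \<in> G\<close>] by simp
qed

lemma card_fibre:
  assumes "v \<in> orbit u"
  shows "card {g \<in> G. g u = v} = card (stabilizer u)"
proof -
  obtain h where h: "h \<in> G" "v = h u" using assms unfolding orbit_def by blast
  have "bij_betw (\<lambda>g. h \<circ> g) (stabilizer u) {g \<in> G. g u = v}"
  proof (rule bij_betw_byWitness[where f' = "\<lambda>g. inv h \<circ> g"])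
    show "\<forall>g\<in>stabilizer u. inv h \<circ> (h \<circ> g) = g"
         "\<forall>g\<in>{g \<in> G. g u = v}. h \<circ> (inv h \<circ> g) = g"
      using h by (auto simp: fun_eq_iff)
    show "(\<lambda>g. h \<circ> g) ` stabilizer u \<subseteq> {g \<in> G. g u = v}"
         "(\<lambda>g. inv h \<circ> g) ` {g \<in> G. g u = v} \<subseteq> stabilizer u"
      using h comp_mem inv_mem unfolding stabilizer_def by auto
  qed
  then show ?thesis by (simp add: bij_betw_same_card)
qed

lemma sum_over_group:
  "(\<Sum>g\<in>G. f (g u)) = of_nat (card (stabilizer u)) * (\<Sum>v\<in>orbit u. f v)"
proof -
  have "(\<Sum>g\<in>G. f (g u)) = (\<Sum>v\<in>orbit u. \<Sum>g\<in>{g \<in> G. g u = v}. f (g u))"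
    by (rule sum.group[OF finite_G finite_orbit, symmetric]) (auto simp: orbit_def)
  also have "\<dots> = (\<Sum>v\<in>orbit u. of_nat (card (stabilizer u)) * f v)"
    by (rule sum.cong) (simp_all add: card_fibre)
  finally show ?thesis by (simp add: sum_distrib_left)
qed

lemma card_G: "card G = card (orbit u) * card (stabilizer u)"
  using sum_over_group[of "\<lambda>_. 1::nat" u] by simp

lemma sum_orbit_invariant:
  assumes invariant: "\<And>g x y. g \<in> G \<Longrightarrow> x \<in> V \<Longrightarrow> y \<in> V \<Longrightarrow> d (g x) (g y) = d x y"
    and "g \<in> G" and "u \<in> V"
  shows "(\<Sum>v\<in>orbit (g u). d (g u) v) = (\<Sum>v\<in>orbit u. d u v)"
proof -
  have "bij_betw g (orbit u) (orbit u)"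
    using bij_perm[OF \<open>g \<in> G\<close>] image_orbit[OF \<open>g \<in> G\<close>]
    by (metis bij_betw_subset subset_UNIV)
  then have "(\<Sum>v\<in>orbit u. d (g u) v) = (\<Sum>v\<in>orbit u. d (g u) (g v))"
    by (rule sum.reindex_bij_betw[symmetric])
  also have "\<dots> = (\<Sum>v\<in>orbit u. d u v)"
    using invariant[OF \<open>g \<in> G\<close> \<open>u \<in> V\<close>] orbit_subset[OF \<open>u \<in> V\<close>] by (auto intro: sum.cong)
  finally show ?thesis by (simp add: orbit_perm[OF \<open>g \<in> G\<close>])
qed

lemma orbit_class:
  assumes "w \<in> V"
  shows "{u \<in> V. orbit u = orbit w} = orbit w"
proof (intro equalityI subsetI)
  fix u assume "u \<in> {u \<in> V. orbit u = orbit w}"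
  then show "u \<in> orbit w" using mem_orbit_self[of u] by simp
next
  fix u assume "u \<in> orbit w"
  then show "u \<in> {u \<in> V. orbit u = orbit w}" using orbit_subset[OF assms] orbit_eq by auto
qed

lemma sum_orbit_div_card:
  fixes h :: "'a \<Rightarrow> real"
  assumes invariant: "\<And>g u. g \<in> G \<Longrightarrow> u \<in> V \<Longrightarrow> h (g u) = h u" and "w \<in> V"
  shows "(\<Sum>u\<in>orbit w. h u / card (orbit u)) = h w"
proof -
  have "h u / card (orbit u) = h w / card (orbit w)" if "u \<in> orbit w" for u
  proof -
    obtain g where "g \<in> G" "u = g w" using \<open>u \<in> orbit w\<close> unfolding orbit_def by blast
    then show ?thesis using invariant[OF \<open>g \<in> G\<close> \<open>w \<in> V\<close>] orbit_perm[OF \<open>g \<in> G\<close>] by simp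
  qed
  then have "(\<Sum>u\<in>orbit w. h u / card (orbit u)) = (\<Sum>u\<in>orbit w. h w / card (orbit w))"
    by (rule sum.cong[OF refl])
  also have "\<dots> = h w"
    using mem_orbit_self[of w] by (simp add: card_gt_0_iff finite_orbit) blast
  finally show ?thesis .
qed

lemma sum_over_orbit_size_Ints:
  fixes h :: "'a \<Rightarrow> real"
  assumes invariant: "\<And>g u. g \<in> G \<Longrightarrow> u \<in> V \<Longrightarrow> h (g u) = h u"
    and integral: "\<And>u. u \<in> V \<Longrightarrow> h u \<in> \<int>"
  shows "(\<Sum>u\<in>V. h u / card (orbit u)) \<in> \<int>"
proof -
  have "(\<Sum>u\<in>V. h u / card (orbit u))
      = (\<Sum>C\<in>orbit ` V. \<Sum>u\<in>{u \<in> V. orbit u = C}. h u / card (orbit u))"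
    by (rule sum.group[OF finite_V finite_imageI[OF finite_V], symmetric]) auto
  also have "\<dots> \<in> \<int>"
  proof (rule Ints_sum)
    fix C assume "C \<in> orbit ` V"
    then obtain w where w: "w \<in> V" "C = orbit w" by blast
    have "(\<Sum>u\<in>{u \<in> V. orbit u = C}. h u / card (orbit u)) = h w"
      unfolding w(2) orbit_class[OF w(1)] by (rule sum_orbit_div_card[of h w, OF _ w(1)]) (rule invariant)
    then show "(\<Sum>u\<in>{u \<in> V. orbit u = C}. h u / card (orbit u)) \<in> \<int>"
      using integral[OF w(1)] by simp
  qed
  finally show ?thesis .
qed

end

lemma Aut_inv:
  assumes "g \<in> Aut V E"
  shows "inv g \<in> Aut V E"
proof -
  have bij_g: "bij_betw g V V" and outside: "\<And>x. x \<notin> V \<Longrightarrow> g x = x"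
    using assms by (auto simp: Aut_def)
  have "bij g" by (rule bij_if_fixes_complement[OF bij_g outside])
  then have left: "inv g (g x) = x" and right: "g (inv g x) = x" for x
    by (simp_all add: bij_is_inj inv_f_f bij_is_surj surj_f_inv_f)
  have bij_inv: "bij_betw (inv g) V V"
    using bij_betw_inv_into_subset[OF \<open>bij g\<close> subset_UNIV bij_betw_imp_surj_on[OF bij_g]] .
  have "inv g x = x" if "x \<notin> V" for x
    using left[of x] outside[OF that] by simp
  moreover have "E u v \<longleftrightarrow> E (inv g u) (inv g v)" if "u \<in> V" "v \<in> V" for u v
  proof -
    have "E (inv g u) (inv g v) \<longleftrightarrow> E (g (inv g u)) (g (inv g v))"
      using assms bij_betw_apply[OF bij_inv] that unfolding Aut_def by blast
    then show ?thesis by (simp add: right)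
  qed
  ultimately show ?thesis using bij_inv unfolding Aut_def by blast
qed

lemma perm_group_Aut:
  assumes "finite V"
  shows "perm_group V (Aut V E)"
proof
  fix g h assume g: "g \<in> Aut V E" and h: "h \<in> Aut V E"
  have "bij_betw (g \<circ> h) V V"
    using g h unfolding Aut_def using bij_betw_trans by blast
  moreover have "\<forall>x. x \<notin> V \<longrightarrow> (g \<circ> h) x = x"
    using g h unfolding Aut_def by simp
  moreover have "E u v \<longleftrightarrow> E ((g \<circ> h) u) ((g \<circ> h) v)" if "u \<in> V" "v \<in> V" for u v
  proof -
    have "h u \<in> V" "h v \<in> V"
      using h that bij_betw_apply unfolding Aut_def by fast+
    then show ?thesis
      using g h that unfolding Aut_def by simp
  qed
  ultimately show "g \<circ> h \<in> Aut V E"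
    unfolding Aut_def by blast
next
  fix g x assume g: "g \<in> Aut V E"
  show "bij_betw g V V" using g by (simp add: Aut_def)
  show "x \<notin> V \<Longrightarrow> g x = x" using g by (simp add: Aut_def)
  show "inv g \<in> Aut V E" using g by (rule Aut_inv)
next
  show "id \<in> Aut V E" by (simp add: Aut_def)
qed (rule assms)

lemma is_walk_map_Aut:
  assumes "g \<in> Aut V E" and walk: "is_walk V E xs"
  shows "is_walk V E (map g xs)"
proof -
  have bij: "bij_betw g V V" and edge: "\<And>u v. u \<in> V \<Longrightarrow> v \<in> V \<Longrightarrow> E u v \<longleftrightarrow> E (g u) (g v)"
    using assms(1) unfolding Aut_def by blast+
  have "E (g (xs ! i)) (g (xs ! Suc i))" if "Suc i < length xs" for i
  proof -
    have "xs ! i \<in> V" "xs ! Suc i \<in> V"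
      using walk that nth_mem[of i xs] nth_mem[of "Suc i" xs] unfolding is_walk_def by auto
    then show ?thesis
      using edge walk that unfolding is_walk_def by blast
  qed
  moreover have "g x \<in> V" if "x \<in> set xs" for x
    using that walk bij_betw_apply[OF bij] unfolding is_walk_def by blast
  ultimately show ?thesis
    using walk by (auto simp: is_walk_def)
qed

locale connected_graph =
  fixes V :: "'a set" and E :: "'a \<Rightarrow> 'a \<Rightarrow> bool"
  assumes simple: "simple_graph V E" and connected: "graph_connected V E"

sublocale connected_graph \<subseteq> aut: perm_group V "Aut V E"
  using simple perm_group_Aut unfolding simple_graph_def by blast

context connected_graph
begin

lemma gdist_Aut_le:
  assumes "g \<in> Aut V E" and "u \<in> V" and "v \<in> V"
  shows "gdist V E (g u) (g v) \<le> gdist V E u v"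
proof -
  obtain xs where xs: "is_walk V E xs" "hd xs = u" "last xs = v"
    and len: "length xs = Suc (gdist V E u v)"
    using shortest_walk[OF connected assms(2,3)] .
  have "xs \<noteq> []" using xs(1) by (simp add: is_walk_def)
  with xs have "hd (map g xs) = g u" and "last (map g xs) = g v"
    by (simp_all add: hd_map last_map)
  with gdist_le_length[OF is_walk_map_Aut[OF assms(1) xs(1)]] len show ?thesis
    by simp
qed

lemma gdist_Aut:
  assumes "g \<in> Aut V E" and "u \<in> V" and "v \<in> V"
  shows "gdist V E (g u) (g v) = gdist V E u v"
  using gdist_Aut_le[OF assms] gdist_Aut_le[OF aut.inv_mem[OF assms(1)]]
    aut.perm_in_V[OF assms(1)] assms by (metis aut.inv_perm_left le_antisym)

definition orbit_gdist_sum :: "'a \<Rightarrow> nat" where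
  "orbit_gdist_sum u = (\<Sum>v\<in>aut.orbit u. gdist V E u v)"

lemma orbit_gdist_sum_Aut:
  "g \<in> Aut V E \<Longrightarrow> u \<in> V \<Longrightarrow> orbit_gdist_sum (g u) = orbit_gdist_sum u"
  unfolding orbit_gdist_sum_def by (rule aut.sum_orbit_invariant[OF gdist_Aut])

lemma GP_orbit_formula:
  "GP V E = card V / 2 * (\<Sum>u\<in>V. orbit_gdist_sum u / card (aut.orbit u))"
proof -
  have "(\<Sum>g\<in>Aut V E. real (gdist V E u (g u)))
      = card (Aut V E) * (orbit_gdist_sum u / card (aut.orbit u))" for u
  proof -
    have "card (aut.orbit u) > 0"
      using aut.mem_orbit_self aut.finite_orbit card_gt_0_iff by blast
    then show ?thesis
      unfolding aut.sum_over_group[of "\<lambda>v. real (gdist V E u v)"] aut.card_G[of u]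
        orbit_gdist_sum_def by simp
  qed
  moreover have "card (Aut V E) > 0"
    using aut.id_mem aut.finite_G card_gt_0_iff by blast
  ultimately show ?thesis
    unfolding GP_def by (simp add: sum_distrib_left)
qed

lemma orbit_gdist_sums_Ints: "(\<Sum>u\<in>V. orbit_gdist_sum u / card (aut.orbit u)) \<in> \<int>"
  by (rule aut.sum_over_orbit_size_Ints) (simp_all add: orbit_gdist_sum_Aut)

context
  fixes A assumes A_V: "A \<subseteq> V" and bipartition: "\<forall>u v. E u v \<longrightarrow> (u \<in> A \<longleftrightarrow> v \<notin> A)"
begin

lemma even_gdist_iff:
  assumes "u \<in> V" and "v \<in> V"
  shows "even (gdist V E u v) \<longleftrightarrow> (u \<in> A \<longleftrightarrow> v \<in> A)"
proof -
  obtain xs where "is_walk V E xs" "hd xs = u" "last xs = v" "length xs = Suc (gdist V E u v)"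
    using shortest_walk[OF connected assms] .
  with is_walk_parity[OF _ bipartition] show ?thesis by fastforce
qed

text \<open>An automorphism moving one vertex to the other side moves every vertex to the other
  side, since it preserves the parity of distances; it then maps \<open>A\<close> injectively into
  \<open>V - A\<close> and back, forcing \<open>card V = 2 * card A\<close>.\<close>

lemma Aut_preserves_sides:
  assumes "odd (card V)" and g: "g \<in> Aut V E" and "u \<in> V"
  shows "g u \<in> A \<longleftrightarrow> u \<in> A"
proof (rule ccontr)
  assume swapped_u: "(g u \<in> A) \<noteq> (u \<in> A)"
  have swap: "g x \<in> A \<longleftrightarrow> x \<notin> A" if "x \<in> V" for x
    using even_gdist_iff[OF that \<open>u \<in> V\<close>] swapped_u gdist_Aut[OF g that \<open>u \<in> V\<close>]
      even_gdist_iff[OF aut.perm_in_V[OF g that] aut.perm_in_V[OF g \<open>u \<in> V\<close>]] by auto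
  have inj: "inj_on g V" using aut.bij_betw_perm[OF g] by (rule bij_betw_imp_inj_on)
  have "card A \<le> card (V - A)"
    using swap A_V aut.perm_in_V[OF g]
    by (intro card_inj_on_le[OF inj_on_subset[OF inj A_V]]) (auto simp: aut.finite_V)
  moreover have "card (V - A) \<le> card A"
    using swap A_V aut.perm_in_V[OF g] finite_subset[OF A_V aut.finite_V]
    by (intro card_inj_on_le[OF inj_on_subset[OF inj]]) auto
  moreover have "card V = card A + card (V - A)"
    using card_Diff_subset[OF finite_subset[OF A_V aut.finite_V] A_V] card_mono[OF aut.finite_V A_V]
    by simp
  ultimately show False using \<open>odd (card V)\<close> by simp
qed

lemma even_gdist_Aut:
  assumes "odd (card V)" and "g \<in> Aut V E" and "u \<in> V"
  shows "even (gdist V E u (g u))"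
  using even_gdist_iff[OF assms(3) aut.perm_in_V[OF assms(2,3)]] Aut_preserves_sides[OF assms]
  by simp

lemma half_orbit_gdist_sums_Ints:
  assumes "odd (card V)"
  shows "(\<Sum>u\<in>V. orbit_gdist_sum u / card (aut.orbit u)) / 2 \<in> \<int>"
proof -
  have "even (orbit_gdist_sum u)" if "u \<in> V" for u
    unfolding orbit_gdist_sum_def aut.orbit_def
    using even_gdist_Aut[OF assms _ that] by (auto intro: dvd_sum)
  then have "real (orbit_gdist_sum u) / 2 = real (orbit_gdist_sum u div 2)" if "u \<in> V" for u
    using that by (simp add: real_of_nat_div)
  then have "(\<Sum>u\<in>V. orbit_gdist_sum u / 2 / card (aut.orbit u)) \<in> \<int>"
    by (intro aut.sum_over_orbit_size_Ints) (simp_all add: orbit_gdist_sum_Aut)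
  moreover have "(\<Sum>u\<in>V. orbit_gdist_sum u / 2 / card (aut.orbit u))
      = (\<Sum>u\<in>V. orbit_gdist_sum u / card (aut.orbit u)) / 2"
    by (simp add: sum_divide_distrib mult.commute)
  ultimately show ?thesis by (simp only:)
qed

end

end

theorem theorem3p4:
  fixes V :: "'a set" and E :: "'a \<Rightarrow> 'a \<Rightarrow> bool"
  assumes "simple_graph V E" and "graph_connected V E" and "bipartite V E"
  shows "GP V E \<in> \<int>"
proof -
  interpret connected_graph V E using assms(1,2) by unfold_locales
  obtain A where A: "A \<subseteq> V" "\<forall>u v. E u v \<longrightarrow> (u \<in> A \<longleftrightarrow> v \<notin> A)"
    using assms(3) unfolding bipartite_def by blast
  define S where "S = (\<Sum>u\<in>V. orbit_gdist_sum u / card (aut.orbit u))"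
  show ?thesis
  proof (cases "even (card V)")
    case True
    then have "GP V E = real (card V div 2) * S"
      unfolding GP_orbit_formula S_def by (simp add: real_of_nat_div)
    then show ?thesis
      using orbit_gdist_sums_Ints unfolding S_def by simp
  next
    case False
    have "GP V E = card V * (S / 2)"
      unfolding GP_orbit_formula S_def by simp
    moreover have "S / 2 \<in> \<int>"
      using half_orbit_gdist_sums_Ints[OF A False] by (simp only: S_def)
    ultimately show ?thesis by (metis Ints_mult Ints_of_nat)
  qed
qed

end
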